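(* Let $M$ be a compact manifold, $\phi\in\mathrm{Diff}^2(M)$ with finitely many periodic points, $M_P$ the set of all periodic points of $\phi$, and $\ell$ the lowest common multiple of their periods. Let $A\in\mathbb{M}_{N\times N}(\mathbb{R})$ with $\rho(A)<1$, $C\in\mathbb{R}^N$, $\omega\in C^2(M,\mathbb{R})$, and $f(m)=\sum_{k=0}^\infty A^kC\,\omega(\phi^{-k}(m))$. Then $f|_{M_P}$ is injective if and only if $g:M_P\to\mathbb{R}^N$, $g=\sum_{k=0}^{\ell-1}A^kC\,(\omega\circ\phi^{-k})$, is injective. *)

theory Defs
  imports "HOL-Analysis.Analysis"
begin

definition C2_on :: "'a::euclidean_space set \<Rightarrow> ('a \<Rightarrow> 'b::euclidean_space) \<Rightarrow> bool" where
  "C2_on U h \<longleftrightarrow> (\<exists>(h' :: 'a \<Rightarrow> ('a \<Rightarrow>\<^sub>L 'b)) (h'' :: 'a \<Rightarrow> ('a \<Rightarrow>\<^sub>L ('a \<Rightarrow>\<^sub>L 'b))).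
      (\<forall>x\<in>U. (h has_derivative blinfun_apply (h' x)) (at x)) \<and>
      (\<forall>x\<in>U. (h' has_derivative blinfun_apply (h'' x)) (at x)) \<and>
      continuous_on U h'')"

definition C2_submanifold :: "'a::euclidean_space set \<Rightarrow> bool" where
  "C2_submanifold M \<longleftrightarrow> (\<exists>k. \<forall>p\<in>M. \<exists>U V (h :: 'a \<Rightarrow> 'a) (B :: 'a set).
      open U \<and> p \<in> U \<and> open V \<and> B \<subseteq> Basis \<and> card B = k \<and>
      bij_betw h U V \<and> C2_on U h \<and> C2_on V (inv_into U h) \<and>
      h ` (U \<inter> M) = V \<inter> span B)"

definition C2_map_on :: "'a::euclidean_space set \<Rightarrow> ('a \<Rightarrow> 'b::euclidean_space) \<Rightarrow> bool" where
  "C2_map_on M h \<longleftrightarrow> (\<forall>p\<in>M. \<exists>U H. open U \<and> p \<in> U \<and> C2_on U H \<and> (\<forall>x\<in>U \<inter> M. H x = h x))"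

definition C2_diffeo_on :: "'a::euclidean_space set \<Rightarrow> ('a \<Rightarrow> 'a) \<Rightarrow> bool" where
  "C2_diffeo_on M \<phi> \<longleftrightarrow> bij_betw \<phi> M M \<and> C2_map_on M \<phi> \<and> C2_map_on M (inv_into M \<phi>)"

definition periodic_points :: "'a set \<Rightarrow> ('a \<Rightarrow> 'a) \<Rightarrow> 'a set" where
  "periodic_points M \<phi> = {m \<in> M. \<exists>n>0. (\<phi> ^^ n) m = m}"

definition period :: "('a \<Rightarrow> 'a) \<Rightarrow> 'a \<Rightarrow> nat" where
  "period \<phi> m = (LEAST n. n > 0 \<and> (\<phi> ^^ n) m = m)"

primrec matpow :: "real^'n^'n \<Rightarrow> nat \<Rightarrow> real^'n^'n" where
  "matpow A 0 = mat 1"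
| "matpow A (Suc k) = A ** matpow A k"

definition spectral_radius :: "real^'n^'n \<Rightarrow> real" where
  "spectral_radius A = Max {cmod z | z. \<exists>v :: complex^'n. v \<noteq> 0 \<and>
       (map_matrix complex_of_real A) *v v = z *s v}"

end

theory Submission
  imports "Jordan_Normal_Form.Spectral_Radius" Defs
begin

text \<open>Since the powers of \<open>\<phi>\<inverse>\<close> are \<open>\<ell>\<close>-periodic on \<open>M\<^sub>P\<close>, splitting the series for \<open>f\<close> into
  blocks of length \<open>\<ell>\<close> gives \<open>f m = g m + A\<^sup>\<ell> f m\<close> on \<open>M\<^sub>P\<close>, i.e. \<open>g = (I - A\<^sup>\<ell>) \<circ> f\<close> there.
  As \<open>\<rho>(A) < 1\<close>, the powers of \<open>A\<close> decay geometrically, so the series converges and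
  \<open>I - A\<^sup>\<ell>\<close> is injective; hence \<open>f\<close> and \<open>g\<close> are injective on \<open>M\<^sub>P\<close> simultaneously.\<close>

no_notation Matrix.vec_index (infixl "$" 100)

definition mat_of_cart :: "(nat \<Rightarrow> 'n::finite) \<Rightarrow> ('a::comm_ring_1)^'n^'n \<Rightarrow> 'a mat" where
  "mat_of_cart e X = Matrix.mat CARD('n) CARD('n) (\<lambda>(i,j). X $ e i $ e j)"

definition vec_of_cart :: "(nat \<Rightarrow> 'n::finite) \<Rightarrow> ('a::comm_ring_1)^'n \<Rightarrow> 'a Matrix.vec" where
  "vec_of_cart e w = Matrix.vec CARD('n) (\<lambda>i. w $ e i)"

definition cart_of_vec :: "(nat \<Rightarrow> 'n::finite) \<Rightarrow> ('a::comm_ring_1) Matrix.vec \<Rightarrow> 'a^'n" where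
  "cart_of_vec e v = (\<chi> s. Matrix.vec_index v (inv_into {0..<CARD('n)} e s))"

lemma mat_of_cart_carrier [simp]:
  "mat_of_cart e (X::'a::comm_ring_1^'n::finite^'n) \<in> carrier_mat CARD('n) CARD('n)"
  by (simp add: mat_of_cart_def)

lemma vec_of_cart_carrier [simp]:
  "vec_of_cart e (w::'a::comm_ring_1^'n::finite) \<in> carrier_vec CARD('n)"
  by (simp add: vec_of_cart_def)

lemma dim_mat_of_cart [simp]:
  "dim_row (mat_of_cart e (X::'a::comm_ring_1^'n::finite^'n)) = CARD('n)"
  "dim_col (mat_of_cart e X) = CARD('n)"
  by (simp_all add: mat_of_cart_def)

abbreviation complexify :: "real^'n^'m \<Rightarrow> complex^'n^'m" where
  "complexify X \<equiv> map_matrix complex_of_real X"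

context
  fixes e :: "nat \<Rightarrow> 'n::finite"
  assumes e: "bij_betw e {0..<CARD('n)} UNIV"
begin

lemma sum_enum: "(\<Sum>j<CARD('n). h (e j)) = (\<Sum>s\<in>UNIV. h s)"
  using sum.reindex_bij_betw[OF e] by (simp add: lessThan_atLeast0)

lemma enum_surj: obtains i where "i < CARD('n)" "e i = s"
  using e unfolding bij_betw_def by (metis UNIV_I atLeastLessThan_iff imageE)

lemma mat_of_cart_mult_vec: "mat_of_cart e X *\<^sub>v vec_of_cart e w = vec_of_cart e (X *v w)"
  by (rule eq_vecI)
    (simp_all add: mat_of_cart_def vec_of_cart_def mult_mat_vec_def scalar_prod_def
      matrix_vector_mult_def atLeast0LessThan flip: sum_enum)

lemma mat_of_cart_mult: "mat_of_cart e (X ** Y) = mat_of_cart e X * mat_of_cart e Y"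
  by (rule eq_matI)
    (simp_all add: mat_of_cart_def scalar_prod_def matrix_matrix_mult_def row_def col_def
      atLeast0LessThan flip: sum_enum)

lemma mat_of_cart_one: "mat_of_cart e (Finite_Cartesian_Product.mat 1) = 1\<^sub>m CARD('n)"
proof -
  have "e i = e j \<longleftrightarrow> i = j" if "i < CARD('n)" "j < CARD('n)" for i j
    using e that unfolding bij_betw_def inj_on_def by auto
  then show ?thesis
    by (intro eq_matI) (auto simp: mat_of_cart_def Finite_Cartesian_Product.mat_def)
qed

lemma vec_of_cart_cart_of_vec: "v \<in> carrier_vec CARD('n) \<Longrightarrow> vec_of_cart e (cart_of_vec e v) = v"
  using e by (intro eq_vecI) (auto simp: vec_of_cart_def cart_of_vec_def bij_betw_inv_into_left)

lemma vec_of_cart_inject: "vec_of_cart e w = vec_of_cart e w' \<longleftrightarrow> w = w'"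
proof
  assume eq: "vec_of_cart e w = vec_of_cart e w'"
  show "w = w'"
  proof (rule vec_eq_iff[THEN iffD2], rule allI)
    fix s
    obtain i where "i < CARD('n)" "e i = s" by (rule enum_surj)
    with arg_cong[OF eq, of "\<lambda>v. Matrix.vec_index v i"] show "w $ s = w' $ s"
      by (simp add: vec_of_cart_def)
  qed
qed simp

lemma vec_of_cart_smult: "vec_of_cart e (z *s w) = z \<cdot>\<^sub>v vec_of_cart e w"
  by (rule eq_vecI) (auto simp: vec_of_cart_def)

lemma vec_of_cart_zero: "vec_of_cart e 0 = 0\<^sub>v CARD('n)"
  by (rule eq_vecI) (auto simp: vec_of_cart_def)

lemma eigenvalue_mat_of_cart_iff:
  "eigenvalue (mat_of_cart e X) z \<longleftrightarrow> (\<exists>w. w \<noteq> 0 \<and> X *v w = z *s w)"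
proof
  assume "eigenvalue (mat_of_cart e X) z"
  then obtain v where v: "v \<in> carrier_vec CARD('n)" "v \<noteq> 0\<^sub>v CARD('n)"
    "mat_of_cart e X *\<^sub>v v = z \<cdot>\<^sub>v v"
    unfolding eigenvalue_def eigenvector_def by (auto simp: mat_of_cart_def)
  then have "v = vec_of_cart e (cart_of_vec e v)" by (simp add: vec_of_cart_cart_of_vec)
  with v show "\<exists>w. w \<noteq> 0 \<and> X *v w = z *s w"
    by (metis mat_of_cart_mult_vec vec_of_cart_inject vec_of_cart_smult vec_of_cart_zero)
next
  assume "\<exists>w. w \<noteq> 0 \<and> X *v w = z *s w"
  then obtain w where "w \<noteq> 0" "X *v w = z *s w" by blast
  then show "eigenvalue (mat_of_cart e X) z"
    unfolding eigenvalue_def eigenvector_def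
    by (intro exI[of _ "vec_of_cart e w"])
      (simp add: mat_of_cart_mult_vec vec_of_cart_smult vec_of_cart_inject flip: vec_of_cart_zero)
qed

lemma spectral_radius_mat_of_cart:
  "Defs.spectral_radius A = Spectral_Radius.spectral_radius (mat_of_cart e (complexify A))"
  unfolding Defs.spectral_radius_def Spectral_Radius.spectral_radius_def
    Spectral_Radius.spectrum_def eigenvalue_mat_of_cart_iff
  by (simp add: image_Collect)

end

lemma matpow_add: "matpow A (k + l) = matpow A k ** matpow A l"
  by (induction k) (simp_all add: matrix_mul_assoc)

lemma matpow_Suc_right: "matpow A (Suc k) = matpow A k ** A"
  using matpow_add[of A k 1] by simp

lemma complexify_mult: "complexify (X ** Y) = complexify X ** complexify Y"
  by (simp add: vec_eq_iff matrix_matrix_mult_def)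

lemma matpow_scaleR: "matpow (c *\<^sub>R A) k = (c ^ k) *\<^sub>R matpow A k"
  by (induction k) (simp_all add: vec_eq_iff matrix_matrix_mult_def sum_distrib_left algebra_simps)

lemma mat_of_cart_matpow:
  assumes "bij_betw e {0..<CARD('n)} (UNIV::'n::finite set)"
  shows "mat_of_cart e (complexify (matpow (A::real^'n^'n) k)) = mat_of_cart e (complexify A) ^\<^sub>m k"
proof (induction k)
  case 0
  have "complexify (Finite_Cartesian_Product.mat 1) = Finite_Cartesian_Product.mat 1"
    by (simp add: vec_eq_iff Finite_Cartesian_Product.mat_def)
  with mat_of_cart_one[OF assms] show ?case
    by (metis matpow.simps(1) pow_mat.simps(1) dim_mat_of_cart(1))
next
  case (Suc k)
  then show ?case
    by (simp del: matpow.simps add: matpow_Suc_right complexify_mult mat_of_cart_mult[OF assms])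
qed

section \<open>Geometric decay of matrix powers\<close>

lemma spectral_radius_scaleR_le:
  fixes A :: "real^'n::finite^'n"
  assumes "0 < c"
  shows "spectral_radius (c *\<^sub>R A) \<le> c * spectral_radius A"
proof -
  obtain e :: "nat \<Rightarrow> 'n" where e: "bij_betw e {0..<CARD('n)} UNIV"
    using ex_bij_betw_nat_finite[of "UNIV::'n set"] by auto
  let ?jnf = "\<lambda>X. mat_of_cart e (complexify X)"
  have "Spectral_Radius.spectral_radius (?jnf (c *\<^sub>R A)) \<in> norm ` spectrum (?jnf (c *\<^sub>R A))"
    by (rule spectral_radius_mem_max(1)[OF mat_of_cart_carrier]) simp
  then obtain z where z: "spectral_radius (c *\<^sub>R A) = cmod z" "eigenvalue (?jnf (c *\<^sub>R A)) z"
    unfolding spectral_radius_mat_of_cart[OF e] spectrum_def by auto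
  then obtain w where w: "w \<noteq> 0" "complexify (c *\<^sub>R A) *v w = z *s w"
    by (auto simp: eigenvalue_mat_of_cart_iff[OF e])
  have "complexify A *v w = (z / c) *s w"
    using arg_cong[OF w(2), of "(*s) (inverse (complex_of_real c))"] assms
    by (simp add: vec_eq_iff matrix_vector_mult_def sum_distrib_left field_simps)
  with w(1) have "eigenvalue (?jnf A) (z / c)"
    by (auto simp: eigenvalue_mat_of_cart_iff[OF e])
  then have "cmod (z / c) \<le> spectral_radius A"
    unfolding spectral_radius_mat_of_cart[OF e]
    by (intro spectral_radius_mem_max(2)[OF mat_of_cart_carrier]) (auto simp: spectrum_def)
  with z(1) assms show ?thesis
    by (simp add: norm_divide field_simps)
qed

lemma matpow_decay:
  fixes A :: "real^'n::finite^'n"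
  assumes "spectral_radius A < 1"
  obtains K r where "0 < r" "r < 1" "\<And>k v. norm (matpow A k *v v) \<le> K * r ^ k * norm v"
proof -
  \<comment> \<open>For \<open>\<rho> < 1\<close> the JNF library only bounds the powers; rescaling by \<open>\<rho> < r < 1\<close> gives decay.\<close>
  define r where "r = (max 0 (spectral_radius A) + 1) / 2"
  have r: "0 < r" "r < 1" "spectral_radius A < r"
    using assms unfolding r_def by auto
  have "inverse r * spectral_radius A < inverse r * r"
    using r by (intro mult_strict_left_mono) simp_all
  then have "spectral_radius (inverse r *\<^sub>R A) < 1"
    using spectral_radius_scaleR_le[of "inverse r" A] r by simp
  moreover obtain e :: "nat \<Rightarrow> 'n" where e: "bij_betw e {0..<CARD('n)} UNIV"
    using ex_bij_betw_nat_finite[of "UNIV::'n set"] by auto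
  ultimately have "Spectral_Radius.spectral_radius (mat_of_cart e (complexify (inverse r *\<^sub>R A))) < 1"
    by (simp add: spectral_radius_mat_of_cart[OF e])
  then obtain c where "\<And>k. norm_bound (mat_of_cart e (complexify (inverse r *\<^sub>R A)) ^\<^sub>m k) c"
    using spectral_radius_jnf_norm_bound_less_1_upper_triangular[OF mat_of_cart_carrier] by blast
  then have c: "\<And>k. norm_bound (mat_of_cart e (complexify (matpow (inverse r *\<^sub>R A) k))) c"
    by (simp add: mat_of_cart_matpow[OF e])
  have entry_bound: "\<bar>matpow A k $ a $ b\<bar> \<le> c * r ^ k" for k a b
  proof -
    obtain i j where "i < CARD('n)" "e i = a" "j < CARD('n)" "e j = b"
      by (metis e enum_surj)
    with c[of k] have "\<bar>inverse r ^ k * matpow A k $ a $ b\<bar> \<le> c"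
      by (auto simp: norm_bound_def mat_of_cart_def matpow_scaleR norm_mult norm_power
          norm_inverse abs_mult power_abs)
    with r show ?thesis
      by (simp add: abs_mult power_inverse field_simps)
  qed
  have "norm (matpow A k *v v) \<le> (real CARD('n) * real CARD('n) * c) * r ^ k * norm v" for k v
  proof -
    have "norm (matpow A k *v v) \<le> onorm ((*v) (matpow A k)) * norm v"
      by (rule onorm[OF matrix_vector_mul_bounded_linear])
    also have "\<dots> \<le> real CARD('n) * real CARD('n) * (c * r ^ k) * norm v"
      by (intro mult_right_mono onorm_le_matrix_component entry_bound) simp
    finally show ?thesis by (simp add: mult_ac)
  qed
  with r that show ?thesis by blast
qed

section \<open>Matrix power series with periodic weights\<close>

lemma finite_range_periodic:
  fixes l :: nat
  assumes "0 < l" "\<And>k. w (k + l) = w k"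
  shows "finite (range w)"
proof -
  have shift: "w (j + l * q) = w j" for j q
    by (induction q) (simp_all add: assms(2) add.assoc[symmetric] add.commute[of l])
  have "w k = w (k mod l)" for k
    using shift[of "k mod l" "k div l"] by simp
  with assms(1) have "range w \<subseteq> w ` {..<l}"
    by (metis image_subsetI image_eqI lessThan_iff mod_less_divisor)
  then show ?thesis
    by (rule finite_subset) simp
qed

lemma summable_matpow_series:
  fixes A :: "real^'n::finite^'n"
  assumes "spectral_radius A < 1" "bounded (range w)"
  shows "summable (\<lambda>k. w k *\<^sub>R (matpow A k *v C))"
proof -
  obtain W where "\<forall>x\<in>range w. norm x \<le> W"
    using assms(2) unfolding bounded_iff ..
  then have W: "\<bar>w k\<bar> \<le> W" for k
    by simp
  obtain r K where r: "0 < r" "r < 1" and K: "\<And>k v. norm (matpow A k *v v) \<le> K * r ^ k * norm v"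
    using matpow_decay[OF assms(1)] by metis
  have "norm (w k *\<^sub>R (matpow A k *v C)) \<le> (W * K * norm C) * r ^ k" for k
  proof -
    have "norm (w k *\<^sub>R (matpow A k *v C)) = \<bar>w k\<bar> * norm (matpow A k *v C)"
      by simp
    also have "\<dots> \<le> W * (K * r ^ k * norm C)"
      by (rule mult_mono[OF W K order_trans[OF abs_ge_zero W] norm_ge_zero])
    finally show ?thesis by (simp add: mult_ac)
  qed
  moreover have "summable (\<lambda>k. (W * K * norm C) * r ^ k)"
    using r by (intro summable_mult summable_geometric) simp
  ultimately show ?thesis
    by (rule summable_comparison_test'[rotated])
qed

lemma matpow_series_periodic:
  fixes A :: "real^'n::finite^'n"
  assumes "spectral_radius A < 1" "0 < l" "\<And>k. w (k + l) = w k"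
  shows "(\<Sum>k. w k *\<^sub>R (matpow A k *v C)) =
    (\<Sum>k<l. w k *\<^sub>R (matpow A k *v C)) + matpow A l *v (\<Sum>k. w k *\<^sub>R (matpow A k *v C))"
proof -
  let ?a = "\<lambda>k. w k *\<^sub>R (matpow A k *v C)"
  have summable: "summable ?a"
    using assms by (intro summable_matpow_series finite_imp_bounded finite_range_periodic)
  have "?a (k + l) = matpow A l *v ?a k" for k
    by (simp add: assms(3) matpow_add[of A l k, symmetric] add.commute matrix_vector_mult_scaleR
        matrix_vector_mul_assoc)
  then have "(\<Sum>k. ?a (k + l)) = matpow A l *v (\<Sum>k. ?a k)"
    by (simp add: bounded_linear.suminf[OF matrix_vector_mul_bounded_linear summable])
  with suminf_split_initial_segment[OF summable, of l] show ?thesis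
    by (simp add: add.commute)
qed

lemma matpow_fixpoint_eq_0:
  fixes A :: "real^'n::finite^'n"
  assumes "spectral_radius A < 1" "0 < l" "matpow A l *v v = v"
  shows "v = 0"
proof -
  obtain r K where r: "0 < r" "r < 1" and K: "\<And>k v. norm (matpow A k *v v) \<le> K * r ^ k * norm v"
    using matpow_decay[OF assms(1)] by metis
  have "matpow A (l * j) *v v = v" for j
    by (induction j) (simp_all add: matpow_add assms(3) flip: matrix_vector_mul_assoc)
  then have "norm v \<le> K * norm v * (r ^ l) ^ j" for j
    using K[of "l * j" v] by (simp add: mult_ac flip: power_mult)
  moreover have "(\<lambda>j. K * norm v * (r ^ l) ^ j) \<longlonglongrightarrow> 0"
    using r assms(2) by (intro tendsto_mult_right_zero LIMSEQ_power_zero) (simp add: power_less_one_iff)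
  ultimately have "norm v \<le> 0"
    by (intro LIMSEQ_le_const) auto
  then show ?thesis by simp
qed

lemma inj_on_iff_fixpoint_free:
  fixes B :: "real^'n::finite^'n"
  assumes "\<And>x. x \<in> P \<Longrightarrow> f x = g x + B *v f x" "\<And>v. B *v v = v \<Longrightarrow> v = 0"
  shows "inj_on f P \<longleftrightarrow> inj_on g P"
proof -
  define h where "h v = v - B *v v" for v
  have "inj h"
  proof (rule injI)
    fix u u' assume "h u = h u'"
    then have "B *v (u - u') = u - u'"
      by (simp add: h_def matrix_vector_mult_diff_distrib algebra_simps)
    then show "u = u'"
      using assms(2) by fastforce
  qed
  have "g x = h (f x)" if "x \<in> P" for x
    using assms(1)[OF that] unfolding h_def by (metis add_diff_cancel_right')
  then have "inj_on g P \<longleftrightarrow> inj_on (h \<circ> f) P"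
    by (intro inj_on_cong) simp
  also have "\<dots> \<longleftrightarrow> inj_on f P"
    by (simp add: inj_on_def inj_eq[OF \<open>inj h\<close>])
  finally show ?thesis ..
qed

section \<open>Periodic points\<close>

lemma funpow_inv_into_funpow:
  assumes "bij_betw \<phi> M M" "x \<in> M"
  shows "(inv_into M \<phi> ^^ n) ((\<phi> ^^ n) x) = x"
proof (induction n)
  case (Suc n)
  have "(\<phi> ^^ n) x \<in> M"
    using bij_betw_funpow[OF assms(1)] assms(2) by (rule bij_betw_apply)
  then have "inv_into M \<phi> ((\<phi> ^^ Suc n) x) = (\<phi> ^^ n) x"
    using assms(1) by (simp add: bij_betw_inv_into_left)
  with Suc show ?case
    by (simp only: funpow_Suc_right comp_apply)
qed simp

lemma
  assumes "m \<in> periodic_points M \<phi>"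
  shows period_pos: "0 < period \<phi> m" and funpow_period: "(\<phi> ^^ period \<phi> m) m = m"
proof -
  obtain n where "0 < n \<and> (\<phi> ^^ n) m = m"
    using assms unfolding periodic_points_def by blast
  then have "0 < period \<phi> m \<and> (\<phi> ^^ period \<phi> m) m = m"
    unfolding period_def by (rule LeastI)
  then show "0 < period \<phi> m" "(\<phi> ^^ period \<phi> m) m = m"
    by blast+
qed

lemma Lcm_period_pos:
  assumes "finite (periodic_points M \<phi>)"
  shows "0 < Lcm (period \<phi> ` periodic_points M \<phi>)"
proof -
  have "0 \<notin> period \<phi> ` periodic_points M \<phi>"
    using period_pos by fastforce
  with assms show ?thesis
    by (subst neq0_conv[symmetric]) (simp add: Lcm_0_iff_nat)
qed

lemma funpow_Lcm_period:
  assumes "finite (periodic_points M \<phi>)" "m \<in> periodic_points M \<phi>"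
  shows "(\<phi> ^^ Lcm (period \<phi> ` periodic_points M \<phi>)) m = m"
proof -
  have "period \<phi> m dvd Lcm (period \<phi> ` periodic_points M \<phi>)"
    using assms(2) by simp
  then show ?thesis
    by (metis funpow_mod_eq[OF funpow_period[OF assms(2)]] dvd_imp_mod_0 funpow_0)
qed

theorem mainTheorem7:
  fixes M :: "'a::euclidean_space set" and \<phi> :: "'a \<Rightarrow> 'a"
    and A :: "real^'n^'n" and C :: "real^'n" and \<omega> :: "'a \<Rightarrow> real"
    and f g :: "'a \<Rightarrow> real^'n" and l :: nat
  assumes "compact M" and "C2_submanifold M"
    and "C2_diffeo_on M \<phi>"
    and "finite (periodic_points M \<phi>)"
    and "l = Lcm (period \<phi> ` periodic_points M \<phi>)"
    and "spectral_radius A < 1"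
    and "C2_map_on M \<omega>"
    and "\<And>m. m \<in> M \<Longrightarrow> f m = (\<Sum>k. \<omega> ((inv_into M \<phi> ^^ k) m) *\<^sub>R (matpow A k *v C))"
    and "\<And>m. m \<in> periodic_points M \<phi> \<Longrightarrow>
           g m = (\<Sum>k<l. \<omega> ((inv_into M \<phi> ^^ k) m) *\<^sub>R (matpow A k *v C))"
  shows "inj_on f (periodic_points M \<phi>) \<longleftrightarrow> inj_on g (periodic_points M \<phi>)"
proof -
  let ?P = "periodic_points M \<phi>" and ?\<psi> = "inv_into M \<phi>"
  have bij: "bij_betw \<phi> M M"
    using assms(3) unfolding C2_diffeo_on_def by blast
  have l_pos: "0 < l"
    using Lcm_period_pos[OF assms(4)] assms(5) by simp
  have "f m = g m + matpow A l *v f m" if m: "m \<in> ?P" for m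
  proof -
    have "m \<in> M"
      using m unfolding periodic_points_def by simp
    with bij have "(?\<psi> ^^ l) m = m"
      using funpow_inv_into_funpow[of \<phi> M m l] funpow_Lcm_period[OF assms(4) m] assms(5) by simp
    then have "\<omega> ((?\<psi> ^^ (k + l)) m) = \<omega> ((?\<psi> ^^ k) m)" for k
      by (simp add: funpow_add)
    from matpow_series_periodic[OF assms(6) l_pos, of "\<lambda>k. \<omega> ((?\<psi> ^^ k) m)", OF this]
    show ?thesis
      using assms(8,9) m \<open>m \<in> M\<close> by simp
  qed
  moreover have "v = 0" if "matpow A l *v v = v" for v
    using matpow_fixpoint_eq_0[OF assms(6) l_pos that] .
  ultimately show ?thesis
    by (rule inj_on_iff_fixpoint_free)
qed

end
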